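(* Let $f$ be a $k$-ary constraint. For any $1\le d\le\deg(f)$ there exists a $d$-ary constraint $g$ expressible by $f$ with constants such that its characteristic polynomial $P_g$ has degree exactly $d$, i.e., its coefficient at the monomial $x_1x_2\cdots x_d$ is non-zero.
   Context: A $k$-ary constraint is $f\colon\{0,1\}^k\to\{0,1\}$. Its characteristic polynomial $P_f$ is the unique multilinear polynomial over $\mathbb{R}$ in $k$ variables with $P_f(x)=f(x)$ for all $x\in\{0,1\}^k$; $\deg(f)=\deg(P_f)$. A $d$-ary constraint $g$ is expressible by $f$ with constants if $g(x_1,\dots,x_d)=f(\xi_1,\dots,\xi_k)$ identically, where each $\xi_j$ is either a variable $x_i$ for some $i\in[d]$ or one of the constants $0,1$. *)

theory Defs
  imports Complex_Main
begin

text \<open>A k-ary constraint is modelled as f :: bool list => bool, of which only the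
values on lists of length k matter. A multilinear polynomial in variables
x_0..x_(k-1) is given by its coefficient function c :: nat set => real
(coefficient of the monomial prod_(i in S) x_i), supported on subsets of {..<k}.\<close>

definition mlpoly_eval :: "nat \<Rightarrow> (nat set \<Rightarrow> real) \<Rightarrow> bool list \<Rightarrow> real" where
  "mlpoly_eval k c x = (\<Sum>S\<in>Pow {..<k}. c S * (\<Prod>i\<in>S. of_bool (x ! i)))"

definition char_coeff :: "nat \<Rightarrow> (bool list \<Rightarrow> bool) \<Rightarrow> nat set \<Rightarrow> real" where
  "char_coeff k f = (THE c. (\<forall>S. c S \<noteq> 0 \<longrightarrow> S \<subseteq> {..<k}) \<and>
      (\<forall>x. length x = k \<longrightarrow> mlpoly_eval k c x = of_bool (f x)))"

text \<open>deg(f) = deg(P_f) (taken to be 0 for the zero polynomial).\<close>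
definition cdeg :: "nat \<Rightarrow> (bool list \<Rightarrow> bool) \<Rightarrow> nat" where
  "cdeg k f = Max ({card S | S. S \<subseteq> {..<k} \<and> char_coeff k f S \<noteq> 0} \<union> {0})"

text \<open>g (d-ary) is expressible by f (k-ary) with constants: g(x) = f(xi_1,...,xi_k)
where each xi_j is a variable x_i (Inl i, i < d) or a constant (Inr b).\<close>
definition expressible :: "nat \<Rightarrow> (bool list \<Rightarrow> bool) \<Rightarrow> nat \<Rightarrow> (bool list \<Rightarrow> bool) \<Rightarrow> bool" where
  "expressible d g k f = (\<exists>\<xi> :: (nat + bool) list. length \<xi> = k \<and>
      (\<forall>e\<in>set \<xi>. \<forall>i. e = Inl i \<longrightarrow> i < d) \<and>
      (\<forall>x. length x = d \<longrightarrow>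
         g x = f (map (\<lambda>e. case e of Inl i \<Rightarrow> x ! i | Inr b \<Rightarrow> b) \<xi>)))"

end

theory Submission
  imports Defs
begin

text \<open>By Moebius inversion, the coefficient of x_S in P_f is, up to the sign (-1)^|S|, the
alternating sum of f over the subcube of {0,1}^k spanned by the coordinates in S with all
other coordinates set to 0. Splitting such a subcube along one coordinate j expresses its
alternating sum as the difference of the sums over the two halves, where j is fixed to 0
resp. 1; so if it is nonzero, one of the halves has a nonzero sum. Starting from a monomial
of maximal degree and shrinking it coordinate by coordinate yields a subcube of dimension d
with nonzero alternating sum, and the restriction of f to it (free variables on the subcube,
constants elsewhere) is a d-ary constraint whose top coefficient is nonzero.\<close>

definition bits :: "nat \<Rightarrow> nat set \<Rightarrow> bool list" where
  "bits k U = map (\<lambda>i. i \<in> U) [0..<k]"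

definition cube_point :: "nat \<Rightarrow> nat set \<Rightarrow> (nat \<Rightarrow> bool) \<Rightarrow> nat set \<Rightarrow> bool list" where
  "cube_point k A b U = map (\<lambda>i. if i \<in> A then i \<in> U else b i) [0..<k]"

definition subcube_alt_sum ::
    "nat \<Rightarrow> (bool list \<Rightarrow> bool) \<Rightarrow> nat set \<Rightarrow> (nat \<Rightarrow> bool) \<Rightarrow> real" where
  "subcube_alt_sum k f A b = (\<Sum>U\<in>Pow A. (-1) ^ card U * of_bool (f (cube_point k A b U)))"

lemma length_bits [simp]: "length (bits k U) = k"
  by (simp add: bits_def)

lemma true_set_bits: "S \<subseteq> {..<k} \<Longrightarrow> {i. i < k \<and> bits k S ! i} = S"
  by (auto simp: bits_def)

lemma bits_true_set: "length x = k \<Longrightarrow> bits k {i. i < k \<and> x ! i} = x"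
  by (intro nth_equalityI) (auto simp: bits_def)

lemma cube_point_const_False: "U \<subseteq> A \<Longrightarrow> cube_point k A (\<lambda>_. False) U = bits k U"
  by (auto simp: cube_point_def bits_def)

lemma cube_point_full: "cube_point k {..<k} b U = bits k U"
  by (simp add: cube_point_def bits_def)

lemma mlpoly_eval_eq_sum_Pow:
  assumes "length x = k"
  shows "mlpoly_eval k c x = (\<Sum>S\<in>Pow {i. i < k \<and> x ! i}. c S)"
proof -
  let ?X = "{i. i < k \<and> x ! i}"
  have monomial: "(\<Prod>i\<in>S. of_bool (x ! i) :: real) = of_bool (S \<subseteq> ?X)"
    if "S \<subseteq> {..<k}" for S
    using that finite_subset[OF that] by (cases "S \<subseteq> ?X") (auto intro!: prod.neutral)
  have "mlpoly_eval k c x = (\<Sum>S\<in>Pow {..<k}. if S \<subseteq> ?X then c S else 0)"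
    unfolding mlpoly_eval_def by (rule sum.cong) (auto simp: monomial)
  also have "\<dots> = (\<Sum>S\<in>{S\<in>Pow {..<k}. S \<subseteq> ?X}. c S)"
    by (rule sum.inter_filter[symmetric]) simp
  also have "{S\<in>Pow {..<k}. S \<subseteq> ?X} = Pow ?X"
    by auto
  finally show ?thesis .
qed

lemma sum_Pow_vanishing_imp_zero:
  fixes D :: "'a set \<Rightarrow> 'b::comm_monoid_add"
  assumes "finite S" and "\<And>T. T \<subseteq> S \<Longrightarrow> (\<Sum>U\<in>Pow T. D U) = 0"
  shows "D S = 0"
  using assms
proof (induction S rule: finite_psubset_induct)
  case (psubset S)
  have "(\<Sum>U\<in>Pow S - {S}. D U) = 0"
    using psubset.IH psubset.prems by (intro sum.neutral) auto
  moreover have "(\<Sum>U\<in>Pow S. D U) = D S + (\<Sum>U\<in>Pow S - {S}. D U)"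
    using psubset.hyps by (simp add: sum.remove)
  ultimately show ?case
    using psubset.prems by simp
qed

lemma mlpoly_coeffs_unique:
  assumes supp1: "\<And>S. c1 S \<noteq> 0 \<Longrightarrow> S \<subseteq> {..<k}"
    and supp2: "\<And>S. c2 S \<noteq> 0 \<Longrightarrow> S \<subseteq> {..<k}"
    and eval: "\<And>x. length x = k \<Longrightarrow> mlpoly_eval k c1 x = mlpoly_eval k c2 x"
  shows "c1 = c2"
proof
  fix S
  define D where "D T = c1 T - c2 T" for T
  have suppD: "D T \<noteq> 0 \<Longrightarrow> T \<subseteq> {..<k}" for T
    by (cases "c1 T = 0") (auto simp: D_def dest: supp1 supp2)
  have "(\<Sum>U\<in>Pow T. D U) = 0" if "T \<subseteq> {..<k}" for T
  proof -
    have "(\<Sum>U\<in>Pow T. D U) = mlpoly_eval k D (bits k T)"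
      using mlpoly_eval_eq_sum_Pow[of "bits k T" k D] true_set_bits[OF that] by simp
    also have "\<dots> = mlpoly_eval k c1 (bits k T) - mlpoly_eval k c2 (bits k T)"
      by (simp add: mlpoly_eval_def D_def left_diff_distrib sum_subtractf)
    finally show ?thesis
      using eval by simp
  qed
  then have "D S = 0"
    using suppD sum_Pow_vanishing_imp_zero[of S D] finite_subset by (metis finite_lessThan subset_trans)
  then show "c1 S = c2 S"
    by (simp add: D_def)
qed

lemma char_coeff_eqI:
  assumes "\<And>S. c S \<noteq> 0 \<Longrightarrow> S \<subseteq> {..<k}"
    and "\<And>x. length x = k \<Longrightarrow> mlpoly_eval k c x = of_bool (f x)"
  shows "char_coeff k f = c"
  unfolding char_coeff_def
  by (rule the_equality) (use assms in \<open>auto intro!: mlpoly_coeffs_unique[where k = k]\<close>)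

lemma char_coeff_eq_subcube_alt_sum:
  "char_coeff k f S =
    (if S \<subseteq> {..<k} then (-1) ^ card S * subcube_alt_sum k f S (\<lambda>_. False) else 0)"
proof -
  define c where "c S = (if S \<subseteq> {..<k} then (-1) ^ card S * subcube_alt_sum k f S (\<lambda>_. False) else 0)"
    for S
  define F where "F U = (of_bool (f (bits k U)) :: real)" for U
  have c_Pow: "c S = (-1) ^ card S * (\<Sum>U\<in>Pow S. (-1) ^ card U * F U)" if "S \<subseteq> {..<k}" for S
    using that by (auto simp: c_def F_def subcube_alt_sum_def cube_point_const_False intro!: sum.cong)
  have "mlpoly_eval k c x = of_bool (f x)" if x: "length x = k" for x
  proof -
    let ?X = "{i. i < k \<and> x ! i}"
    have "mlpoly_eval k c x = (\<Sum>S\<in>Pow ?X. c S)"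
      by (rule mlpoly_eval_eq_sum_Pow[OF x])
    also have "\<dots> = (\<Sum>S\<in>Pow ?X. (-1) ^ card S * (\<Sum>U\<in>Pow S. (-1) ^ card U * F U))"
      by (intro sum.cong refl c_Pow) auto
    also have "\<dots> = F ?X"
      by (rule inclusion_exclusion_symmetric[symmetric]) auto
    finally show ?thesis
      using bits_true_set[OF x] by (simp add: F_def)
  qed
  then have "char_coeff k f = c"
    by (intro char_coeff_eqI) (simp_all add: c_def split: if_splits)
  then show ?thesis
    by (simp add: c_def)
qed

lemma cdeg_candidates_bounded: "{card S | S. S \<subseteq> {..<k} \<and> P S} \<union> {0} \<subseteq> {..k}"
  using card_mono[of "{..<k}"] by fastforce

lemma cdeg_attained:
  assumes "0 < cdeg k f"
  obtains S where "S \<subseteq> {..<k}" "char_coeff k f S \<noteq> 0" "card S = cdeg k f"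
proof -
  let ?M = "{card S | S. S \<subseteq> {..<k} \<and> char_coeff k f S \<noteq> 0} \<union> {0}"
  have "cdeg k f \<in> ?M"
    unfolding cdeg_def
    by (rule Max_in) (use finite_subset[OF cdeg_candidates_bounded] in auto)
  then show ?thesis
    using assms that by auto
qed

lemma cdeg_eq_arity_if_top_coeff:
  assumes "char_coeff k f {..<k} \<noteq> 0"
  shows "cdeg k f = k"
  unfolding cdeg_def
proof (rule Max_eqI)
  show "finite ({card S | S. S \<subseteq> {..<k} \<and> char_coeff k f S \<noteq> 0} \<union> {0})"
    by (rule finite_subset[OF cdeg_candidates_bounded]) simp
  show "y \<le> k" if "y \<in> {card S | S. S \<subseteq> {..<k} \<and> char_coeff k f S \<noteq> 0} \<union> {0}" for y
    using that cdeg_candidates_bounded by (meson atMost_iff subsetD)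
  show "k \<in> {card S | S. S \<subseteq> {..<k} \<and> char_coeff k f S \<noteq> 0} \<union> {0}"
    using assms by force
qed

lemma subcube_alt_sum_insert:
  assumes "finite B" "j \<notin> B"
  shows "subcube_alt_sum k f (insert j B) b =
           subcube_alt_sum k f B (b(j := False)) - subcube_alt_sum k f B (b(j := True))"
proof -
  let ?h = "\<lambda>A b U. (-1::real) ^ card U * of_bool (f (cube_point k A b U))"
  have "subcube_alt_sum k f (insert j B) b =
          (\<Sum>U\<in>Pow B. ?h (insert j B) b U) + (\<Sum>U\<in>insert j ` Pow B. ?h (insert j B) b U)"
    unfolding subcube_alt_sum_def Pow_insert
    by (rule sum.union_disjoint) (use assms in auto)
  also have "(\<Sum>U\<in>insert j ` Pow B. ?h (insert j B) b U) = (\<Sum>U\<in>Pow B. ?h (insert j B) b (insert j U))"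
  proof -
    have "inj_on (insert j) (Pow B)"
      using assms by (intro inj_onI) (metis Pow_iff insert_ident subsetD)
    then show ?thesis
      by (simp add: sum.reindex)
  qed
  also have "(\<Sum>U\<in>Pow B. ?h (insert j B) b U) = subcube_alt_sum k f B (b(j := False))"
    unfolding subcube_alt_sum_def
  proof (intro sum.cong refl)
    fix U assume "U \<in> Pow B"
    then have "cube_point k (insert j B) b U = cube_point k B (b(j := False)) U"
      using assms by (auto simp: cube_point_def)
    then show "?h (insert j B) b U = ?h B (b(j := False)) U"
      by simp
  qed
  also have "(\<Sum>U\<in>Pow B. ?h (insert j B) b (insert j U)) = - subcube_alt_sum k f B (b(j := True))"
    unfolding subcube_alt_sum_def sum_negf[symmetric]
  proof (intro sum.cong refl)
    fix U assume U: "U \<in> Pow B"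
    then have "cube_point k (insert j B) b (insert j U) = cube_point k B (b(j := True)) U"
      using assms by (auto simp: cube_point_def)
    moreover have "card (insert j U) = Suc (card U)"
      using U assms by (meson PowD card_insert_disjoint finite_subset subsetD)
    ultimately show "?h (insert j B) b (insert j U) = - ?h B (b(j := True)) U"
      by simp
  qed
  finally show ?thesis
    by (simp only: diff_conv_add_uminus)
qed

lemma subcube_alt_sum_nonzero_subset:
  assumes "finite A" "subcube_alt_sum k f A b \<noteq> 0" "d \<le> card A"
  shows "\<exists>A' b'. A' \<subseteq> A \<and> card A' = d \<and> subcube_alt_sum k f A' b' \<noteq> 0"
  using assms
proof (induction "card A - d" arbitrary: A b)
  case 0
  then show ?case
    by auto
next
  case (Suc m)
  then have "A \<noteq> {}"
    by auto
  then obtain j B where AB: "A = insert j B" "j \<notin> B" "finite B"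
    using Suc.prems(1) by (metis Set.set_insert finite_insert ex_in_conv)
  have "subcube_alt_sum k f B (b(j := False)) \<noteq> 0 \<or> subcube_alt_sum k f B (b(j := True)) \<noteq> 0"
    using subcube_alt_sum_insert[OF AB(3,2), of k f b] Suc.prems(2) AB(1) by auto
  then obtain b' where "subcube_alt_sum k f B b' \<noteq> 0"
    by blast
  moreover have "m = card B - d" "d \<le> card B"
    using Suc.hyps(2) AB by auto
  ultimately show ?case
    using Suc.hyps(1)[of B b'] AB by blast
qed

lemma expressible_restriction_to_subcube:
  assumes A: "A \<subseteq> {..<k}" "card A = d"
  shows "\<exists>g. expressible d g k f \<and> subcube_alt_sum d g {..<d} c = subcube_alt_sum k f A b"
proof -
  have "finite A"
    using A(1) finite_subset by blast
  then obtain h where h: "bij_betw h {..<d} A"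
    using ex_bij_betw_nat_finite[of A] A(2) by (auto simp: atLeast0LessThan)
  define r where "r = inv_into {..<d} h"
  have h_image: "h ` {..<d} = A" and inj_h: "inj_on h {..<d}"
    using h by (auto simp: bij_betw_def)
  have r: "r i < d" "h (r i) = i" if "i \<in> A" for i
    using that h_image inv_into_into[of i h "{..<d}"] f_inv_into_f[of i h "{..<d}"]
    by (auto simp: r_def)
  have r_mem_iff: "r i \<in> V \<longleftrightarrow> i \<in> h ` V" if "i \<in> A" "V \<subseteq> {..<d}" for i V
    using that r inv_into_f_f[OF inj_h] unfolding r_def by (metis image_iff subsetD)
  define \<xi> :: "(nat + bool) list" where
    "\<xi> = map (\<lambda>i. if i \<in> A then Inl (r i) else Inr (b i)) [0..<k]"
  define g where "g x = f (map (\<lambda>e. case e of Inl i \<Rightarrow> x ! i | Inr b \<Rightarrow> b) \<xi>)" for x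
  have "expressible d g k f"
    unfolding expressible_def by (intro exI[of _ \<xi>]) (auto simp: \<xi>_def g_def r)
  have g_bits: "g (bits d V) = f (cube_point k A b (h ` V))" if V: "V \<subseteq> {..<d}" for V
  proof -
    have "map (\<lambda>e. case e of Inl i \<Rightarrow> bits d V ! i | Inr b \<Rightarrow> b) \<xi> = cube_point k A b (h ` V)"
      using r r_mem_iff[OF _ V] by (intro nth_equalityI) (auto simp: \<xi>_def cube_point_def bits_def)
    then show ?thesis
      by (simp add: g_def)
  qed
  have card_image_h: "card (h ` V) = card V" if "V \<subseteq> {..<d}" for V
    using inj_h that by (meson card_image inj_on_subset)
  have "subcube_alt_sum k f A b =
          (\<Sum>V\<in>Pow {..<d}. (-1) ^ card (h ` V) * of_bool (f (cube_point k A b (h ` V))))"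
    unfolding subcube_alt_sum_def by (rule sum.reindex_bij_betw[OF bij_betw_Pow[OF h], symmetric])
  also have "\<dots> = subcube_alt_sum d g {..<d} c"
    unfolding subcube_alt_sum_def cube_point_full
    by (intro sum.cong refl) (simp add: g_bits card_image_h)
  finally show ?thesis
    using \<open>expressible d g k f\<close> by auto
qed

theorem lemma14:
  fixes f :: "bool list \<Rightarrow> bool" and k d :: nat
  assumes "1 \<le> d" and "d \<le> cdeg k f"
  shows "\<exists>g :: bool list \<Rightarrow> bool. expressible d g k f \<and> cdeg d g = d \<and> char_coeff d g {..<d} \<noteq> 0"
proof -
  have "0 < cdeg k f"
    using assms by simp
  then obtain S where S: "S \<subseteq> {..<k}" "char_coeff k f S \<noteq> 0" "card S = cdeg k f"
    by (rule cdeg_attained)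
  have "\<exists>A b. A \<subseteq> S \<and> card A = d \<and> subcube_alt_sum k f A b \<noteq> 0"
  proof (rule subcube_alt_sum_nonzero_subset)
    show "finite S"
      using S(1) finite_subset by blast
    show "subcube_alt_sum k f S (\<lambda>_. False) \<noteq> 0"
      using S(1,2) by (simp add: char_coeff_eq_subcube_alt_sum)
    show "d \<le> card S"
      using S(3) assms(2) by simp
  qed
  then obtain A b where A: "A \<subseteq> S" "card A = d" "subcube_alt_sum k f A b \<noteq> 0"
    by blast
  then obtain g where g: "expressible d g k f"
      "subcube_alt_sum d g {..<d} (\<lambda>_. False) = subcube_alt_sum k f A b"
    using expressible_restriction_to_subcube[of A k d f "\<lambda>_. False" b] S(1) by blast
  then have "char_coeff d g {..<d} \<noteq> 0"
    using A(3) by (simp add: char_coeff_eq_subcube_alt_sum)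
  then show ?thesis
    using g(1) cdeg_eq_arity_if_top_coeff by blast
qed

end
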